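(* Let $x\ge3$ be a fixed integer. Let $\omega_n^-(x)$ be the number of square-free words of length $n$ over an $x$-letter alphabet, and $\psi_n(x)$ the number of those which contain every one of the $x$ letters. Then $$\lim_{n\to\infty}\frac{\log\psi_n(x)}{n}=\lim_{n\to\infty}\frac{\log\omega_n^-(x)}{n}.$$
   Context: A square is a nonempty word of the form $uu$; a word is square-free if no contiguous subword of it is a square. *)

theory Defs
  imports Complex_Main
begin

definition square_free :: "'a list \<Rightarrow> bool" where
  "square_free w \<longleftrightarrow> \<not> (\<exists>p u s. u \<noteq> [] \<and> w = p @ u @ u @ s)"

definition omega_minus :: "nat \<Rightarrow> nat \<Rightarrow> nat" where
  "omega_minus x n = card {w :: nat list. length w = n \<and> set w \<subseteq> {..<x} \<and> square_free w}"

definition psi :: "nat \<Rightarrow> nat \<Rightarrow> nat" where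
  "psi x n = card {w :: nat list. length w = n \<and> set w = {..<x} \<and> square_free w}"

end

theory Submission
  imports Defs
begin

text \<open>
  Splitting a square-free word of length m + n into its prefix of length m and its suffix shows
  that omega_minus is submultiplicative, so by Fekete's lemma ln (omega_minus n) / n converges.
  Conversely every square-free word v of length n \<ge> x is drop j u @ s, where s is a suffix of
  v of length j \<le> x and u is a square-free word using all x letters: u is obtained from the
  remaining prefix p of v by prepending the j letters missing from p, each once, and j is chosen
  so that exactly j letters are missing.  Hence omega_minus n is at most psi n times the number
  of words of length at most x, a constant, and the two growth rates agree.
\<close>

lemma subadditive_le_mult_add:
  fixes a :: "nat \<Rightarrow> real"
  assumes sub: "\<And>m n. a (m + n) \<le> a m + a n"
  shows "a (q * k + r) \<le> real q * a k + a r"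
proof (induction q)
  case 0
  then show ?case by simp
next
  case (Suc q)
  have "a (Suc q * k + r) \<le> a k + a (q * k + r)"
    using sub[of k "q * k + r"] by (simp add: add.assoc)
  with Suc show ?case by (simp add: algebra_simps)
qed

lemma subadditive_eventually_div_less:
  fixes a :: "nat \<Rightarrow> real"
  assumes sub: "\<And>m n. a (m + n) \<le> a m + a n" and nonneg: "\<And>n. a n \<ge> 0"
    and "k \<ge> 1" and "e > 0"
  shows "eventually (\<lambda>n. a n / real n < a k / real k + e) sequentially"
proof -
  define M where "M = Max (a ` {..<k})"
  have "eventually (\<lambda>n. M / real n < e) sequentially"
    using order_tendstoD(2)[OF lim_const_over_n[of M] \<open>e > 0\<close>] .
  moreover have "a n / real n \<le> a k / real k + M / real n" if "n \<ge> 1" for n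
  proof -
    have "a (n mod k) \<le> M"
      unfolding M_def using \<open>k \<ge> 1\<close> by (intro Max_ge) auto
    moreover have "real (n div k) * a k \<le> real n * (a k / real k)"
    proof -
      have "real (n div k) * real k \<le> real n"
        by (metis div_times_less_eq_dividend of_nat_le_iff of_nat_mult)
      from mult_right_mono[OF this, of "a k / real k"] show ?thesis
        using \<open>k \<ge> 1\<close> nonneg[of k] by simp
    qed
    ultimately have "a n \<le> real n * (a k / real k) + M"
      using subadditive_le_mult_add[of a, OF sub, of "n div k" k "n mod k"] by simp
    then have "a n / real n \<le> (real n * (a k / real k) + M) / real n"
      by (rule divide_right_mono) simp
    also have "\<dots> = a k / real k + M / real n"
      using that by (simp add: add_divide_distrib)
    finally show ?thesis .
  qed
  ultimately show ?thesis
    unfolding eventually_sequentially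
    by (metis (no_types, opaque_lifting) add_strict_left_mono order_le_less_trans max.boundedE)
qed

theorem fekete_subadditive_LIMSEQ:
  fixes a :: "nat \<Rightarrow> real"
  assumes sub: "\<And>m n. a (m + n) \<le> a m + a n" and nonneg: "\<And>n. a n \<ge> 0"
  shows "(\<lambda>n. a n / real n) \<longlonglongrightarrow> (INF n\<in>{1..}. a n / real n)"
proof -
  have bdd: "bdd_below ((\<lambda>n. a n / real n) ` {1..})"
    using nonneg by (intro bdd_belowI2[of _ 0]) simp
  show ?thesis
  proof (rule order_tendstoI)
    fix y
    assume "y < (INF n\<in>{1..}. a n / real n)"
    then have "y < a n / real n" if "n \<ge> 1" for n
      using cINF_lower[OF bdd, of n] that by simp
    then show "eventually (\<lambda>n. y < a n / real n) sequentially"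
      unfolding eventually_sequentially by blast
  next
    fix y
    assume "(INF n\<in>{1..}. a n / real n) < y"
    then obtain k where "k \<ge> 1" "a k / real k < y"
      by (subst (asm) cINF_less_iff[OF _ bdd]) auto
    then show "eventually (\<lambda>n. a n / real n < y) sequentially"
      using subadditive_eventually_div_less[of a, OF sub nonneg \<open>k \<ge> 1\<close>, of "y - a k / real k"]
      by simp
  qed
qed

lemma submultiplicative_ln_div_convergent:
  fixes b :: "nat \<Rightarrow> nat"
  assumes submult: "\<And>m n. b (m + n) \<le> b m * b n"
  shows "convergent (\<lambda>n. ln (real (b n)) / real n)"
proof (cases "\<exists>n\<^sub>0. b n\<^sub>0 = 0")
  case True
  then obtain n\<^sub>0 where "b n\<^sub>0 = 0" by blast
  then have "b n = 0" if "n \<ge> n\<^sub>0" for n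
    using submult[of n\<^sub>0 "n - n\<^sub>0"] that by simp
  then have "eventually (\<lambda>n. ln (real (b n)) / real n = 0) sequentially"
    unfolding eventually_sequentially by (intro exI[of _ n\<^sub>0]) simp
  then show ?thesis
    unfolding convergent_def by (blast intro: tendsto_eventually)
next
  case False
  then have pos: "real (b n) \<ge> 1" for n
    by (simp add: Suc_le_eq)
  have "ln (real (b (m + n))) \<le> ln (real (b m)) + ln (real (b n))" for m n
  proof -
    have "ln (real (b (m + n))) \<le> ln (real (b m) * real (b n))"
      using submult[of m n] pos[of "m + n"] pos[of m] pos[of n]
      by (subst ln_le_cancel_iff) (auto simp flip: of_nat_mult)
    also have "\<dots> = ln (real (b m)) + ln (real (b n))"
      using pos[of m] pos[of n] by (simp add: ln_mult)
    finally show ?thesis .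
  qed
  then have "(\<lambda>n. ln (real (b n)) / real n) \<longlonglongrightarrow> (INF n\<in>{1..}. ln (real (b n)) / real n)"
    by (rule fekete_subadditive_LIMSEQ) (use pos in simp)
  then show ?thesis
    unfolding convergent_def by blast
qed

lemma square_free_infix:
  "square_free (p @ w @ s) \<Longrightarrow> square_free w"
  unfolding square_free_def by (metis append.assoc)

lemma square_free_appendD:
  assumes "square_free (u @ v)"
  shows "square_free u" and "square_free v"
  using square_free_infix[of "[]" u v] square_free_infix[of u v "[]"] assms by simp_all

lemma square_free_distinct_append:
  assumes "distinct l" and "set l \<inter> set w = {}" and "square_free w"
  shows "square_free (l @ w)"
  unfolding square_free_def
proof
  assume "\<exists>p u s. u \<noteq> [] \<and> l @ w = p @ u @ u @ s"
  then obtain p u s where "u \<noteq> []" and eq: "l @ w = p @ u @ u @ s" by blast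
  show False
  proof (cases "length l \<le> length p")
    case True
    then obtain p' where "w = p' @ u @ u @ s"
      using eq by (metis append_eq_append_conv_if)
    with \<open>u \<noteq> []\<close> \<open>square_free w\<close> show False
      unfolding square_free_def by blast
  next
    case False
    define i where "i = length p"
    define j where "j = length p + length u"
    have "i < j" "i < length l" "j < length (l @ w)"
      using False \<open>u \<noteq> []\<close> eq by (auto simp: i_def j_def)
    have "(l @ w) ! i = (l @ w) ! j"
      unfolding eq i_def j_def using \<open>u \<noteq> []\<close> by (simp add: nth_append)
    then show False
    proof (cases "j < length l")
      case True
      then have "l ! i = l ! j"
        using \<open>(l @ w) ! i = (l @ w) ! j\<close> \<open>i < length l\<close> by (simp add: nth_append)
      then show False
        using nth_eq_iff_index_eq[OF \<open>distinct l\<close> \<open>i < length l\<close> True] \<open>i < j\<close> by simp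
    next
      case False
      then have "(l @ w) ! j \<in> set w"
        using \<open>j < length (l @ w)\<close> by (simp add: nth_append)
      moreover have "(l @ w) ! i \<in> set l"
        using \<open>i < length l\<close> by (simp add: nth_append)
      ultimately show False
        using \<open>(l @ w) ! i = (l @ w) ! j\<close> \<open>set l \<inter> set w = {}\<close> by auto
    qed
  qed
qed

lemma mono_nat_fixpoint_le:
  fixes f :: "nat \<Rightarrow> nat"
  assumes "mono f" and "f K \<le> K"
  obtains j where "j \<le> K" and "f j = j"
proof
  define j where "j = (LEAST j. f j \<le> j)"
  show "j \<le> K"
    unfolding j_def using \<open>f K \<le> K\<close> by (rule Least_le)
  have "f j \<le> j"
    unfolding j_def using \<open>f K \<le> K\<close> by (rule LeastI)
  moreover have "j \<le> f j"
  proof (cases j)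
    case (Suc i)
    then have "i < f i"
      using not_less_Least[of i "\<lambda>j. f j \<le> j"] j_def by auto
    with Suc \<open>mono f\<close> show ?thesis
      by (metis Suc_leI le_trans lessI less_imp_le monoD)
  qed simp
  ultimately show "f j = j" by simp
qed

lemma square_free_completion:
  assumes "finite A" and "card A \<le> length v" and "set v \<subseteq> A" and "square_free v"
  obtains u s where "length u = length v" and "set u = A" and "square_free u"
    and "set s \<subseteq> A" and "length s \<le> card A" and "v = drop (length s) u @ s"
proof -
  define n where "n = length v"
  define missing where "missing j = A - set (take (n - j) v)" for j
  have "mono (\<lambda>j. card (missing j))"
  proof (rule monoI)
    fix i j :: nat
    assume "i \<le> j"
    then have "set (take (n - j) v) \<subseteq> set (take (n - i) v)"
      by (intro set_take_subset_set_take) simp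
    then show "card (missing i) \<le> card (missing j)"
      unfolding missing_def using \<open>finite A\<close> by (intro card_mono) auto
  qed
  moreover have "card (missing (card A)) \<le> card A"
    unfolding missing_def using \<open>finite A\<close> by (intro card_mono) auto
  ultimately obtain j where "j \<le> card A" and card_missing: "card (missing j) = j"
    by (rule mono_nat_fixpoint_le)
  obtain l where "set l = missing j" and "distinct l"
    using finite_distinct_list[of "missing j"] \<open>finite A\<close> by (auto simp: missing_def)
  define p where "p = take (n - j) v"
  define s where "s = drop (n - j) v"
  have "length l = j"
    using distinct_card[OF \<open>distinct l\<close>] \<open>set l = missing j\<close> card_missing by simp
  have "length s = j"
    unfolding s_def n_def using \<open>j \<le> card A\<close> \<open>card A \<le> length v\<close> by simp
  show thesis
  proof (rule that[of "l @ p" s])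
    show "length (l @ p) = length v"
      unfolding p_def n_def using \<open>length l = j\<close> \<open>j \<le> card A\<close> \<open>card A \<le> length v\<close> by simp
    show "set (l @ p) = A"
      using \<open>set l = missing j\<close> \<open>set v \<subseteq> A\<close> set_take_subset[of "n - j" v]
      unfolding missing_def p_def by auto
    have "square_free p"
      using square_free_appendD(1)[of p s] \<open>square_free v\<close> by (simp add: p_def s_def)
    then show "square_free (l @ p)"
      using \<open>distinct l\<close> \<open>set l = missing j\<close>
      by (intro square_free_distinct_append) (auto simp: missing_def p_def)
    show "set s \<subseteq> A"
      using \<open>set v \<subseteq> A\<close> set_drop_subset[of "n - j" v] unfolding s_def by blast
    show "length s \<le> card A"
      using \<open>length s = j\<close> \<open>j \<le> card A\<close> by simp
    show "v = drop (length s) (l @ p) @ s"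
      using \<open>length s = j\<close> \<open>length l = j\<close> by (simp add: p_def s_def)
  qed
qed

definition square_free_words :: "'a set \<Rightarrow> nat \<Rightarrow> 'a list set" where
  "square_free_words A n = {w. length w = n \<and> set w \<subseteq> A \<and> square_free w}"

lemma finite_square_free_words: "finite A \<Longrightarrow> finite (square_free_words A n)"
  unfolding square_free_words_def
  by (rule finite_subset[OF _ finite_lists_length_eq[of A n]]) auto

lemma card_square_free_words_add_le:
  assumes "finite A"
  shows "card (square_free_words A (m + n))
    \<le> card (square_free_words A m) * card (square_free_words A n)"
proof -
  have "square_free_words A (m + n)
    \<subseteq> (\<lambda>(u, v). u @ v) ` (square_free_words A m \<times> square_free_words A n)"
  proof
    fix w
    assume "w \<in> square_free_words A (m + n)"
    then have "(take m w, drop m w) \<in> square_free_words A m \<times> square_free_words A n"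
      using square_free_appendD[of "take m w" "drop m w"] set_take_subset[of m w]
        set_drop_subset[of m w]
      by (auto simp: square_free_words_def)
    then show "w \<in> (\<lambda>(u, v). u @ v) ` (square_free_words A m \<times> square_free_words A n)"
      by (rule rev_image_eqI) simp
  qed
  then have "card (square_free_words A (m + n))
    \<le> card (square_free_words A m \<times> square_free_words A n)"
    by (intro surj_card_le) (simp_all add: finite_square_free_words \<open>finite A\<close>)
  then show ?thesis
    by (simp add: card_cartesian_product)
qed

lemma card_square_free_words_le_complete:
  assumes "finite A" and "card A \<le> n"
  shows "card (square_free_words A n)
    \<le> card {u \<in> square_free_words A n. set u = A} * card {s. set s \<subseteq> A \<and> length s \<le> card A}"
proof -
  let ?C = "{u \<in> square_free_words A n. set u = A}"
  let ?S = "{s. set s \<subseteq> A \<and> length s \<le> card A}"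
  have "square_free_words A n \<subseteq> (\<lambda>(u, s). drop (length s) u @ s) ` (?C \<times> ?S)"
  proof
    fix v
    assume "v \<in> square_free_words A n"
    then have "card A \<le> length v" "set v \<subseteq> A" "square_free v"
      using \<open>card A \<le> n\<close> by (auto simp: square_free_words_def)
    then obtain u s where "u \<in> ?C" "s \<in> ?S" "v = drop (length s) u @ s"
      using \<open>v \<in> square_free_words A n\<close>
      by (auto simp: square_free_words_def elim!: square_free_completion[OF \<open>finite A\<close>])
    then show "v \<in> (\<lambda>(u, s). drop (length s) u @ s) ` (?C \<times> ?S)"
      by force
  qed
  then have "card (square_free_words A n) \<le> card (?C \<times> ?S)"
    by (intro surj_card_le)
      (simp_all add: finite_square_free_words finite_lists_length_le \<open>finite A\<close>)
  then show ?thesis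
    by (simp add: card_cartesian_product)
qed

lemma abs_ln_diff_le_ln:
  fixes a b C :: nat
  assumes "a \<le> b" and "b \<le> a * C"
  shows "\<bar>ln (real b) - ln (real a)\<bar> \<le> ln (real C)"
proof (cases "a = 0")
  case True
  with assms show ?thesis
    by (cases "C = 0") auto
next
  case False
  with assms have "C \<ge> 1"
    by (cases "C = 0") auto
  have "ln (real b) \<le> ln (real a * real C)"
    using assms False \<open>C \<ge> 1\<close> by (subst ln_le_cancel_iff) (auto simp flip: of_nat_mult)
  also have "\<dots> = ln (real a) + ln (real C)"
    using False \<open>C \<ge> 1\<close> by (simp add: ln_mult)
  finally show ?thesis
    using assms False by auto
qed

theorem mainTheorem8:
  fixes x :: nat
  assumes "x \<ge> 3"
  shows "\<exists>L::real. (\<lambda>n. ln (real (psi x n)) / real n) \<longlonglongrightarrow> L \<and>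
                   (\<lambda>n. ln (real (omega_minus x n)) / real n) \<longlonglongrightarrow> L"
proof -
  have omega_eq: "omega_minus x n = card (square_free_words {..<x} n)" for n
    unfolding omega_minus_def square_free_words_def ..
  have psi_eq: "psi x n = card {u \<in> square_free_words {..<x} n. set u = {..<x}}" for n
    unfolding psi_def square_free_words_def by (rule arg_cong[where f = card]) auto
  define C where "C = card {s :: nat list. set s \<subseteq> {..<x} \<and> length s \<le> x}"
  obtain L where L: "(\<lambda>n. ln (real (omega_minus x n)) / real n) \<longlonglongrightarrow> L"
    using submultiplicative_ln_div_convergent[of "omega_minus x"]
    by (auto simp: omega_eq card_square_free_words_add_le convergent_def)
  have "\<bar>ln (real (omega_minus x n)) - ln (real (psi x n))\<bar> \<le> ln (real C)" if "n \<ge> x" for n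
    using card_square_free_words_le_complete[of "{..<x}" n] that
    by (intro abs_ln_diff_le_ln)
      (auto simp: omega_eq psi_eq C_def intro: card_mono finite_square_free_words)
  then have "(\<lambda>n. (ln (real (omega_minus x n)) - ln (real (psi x n))) / real n) \<longlonglongrightarrow> 0"
    by (intro tendsto_0_le[OF lim_inverse_n', of _ "ln (real C)"] eventually_sequentiallyI[of x])
      (auto simp: abs_divide divide_right_mono)
  from tendsto_diff[OF L this] have "(\<lambda>n. ln (real (psi x n)) / real n) \<longlonglongrightarrow> L"
    by (simp add: diff_divide_distrib)
  with L show ?thesis
    by blast
qed

end
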